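(* Let $(\mathcal{M},\mathrm{dist})$ be a metric space, $\mathcal{F}\subset2^{\mathcal{M}}$, and $J:\mathcal{M}\to\mathbb{R}\cup\{+\infty\}$ lower semi-continuous, with $c=\inf_{A\in\mathcal{F}}\sup_{x\in A}J(x)\in\mathbb{R}$. Assume (F1) every $A\in\mathcal{F}$ is closed in $\mathcal{M}$, and (F2) there is $c'>c$ such that for every sequence $(A_n)\subset\mathcal{F}$ with $A_n\subset\mathcal{M}^{c'}$ for all $n$, $\limsup_nA_n\in\mathcal{F}$. Let $\eta:\mathcal{M}^{c'}\to\mathcal{M}^{c'}$ satisfy ($\eta$1) $\eta(A)\in\mathcal{F}$ whenever $A\in\mathcal{F}$ and $A\subset\mathcal{M}^{c'}$, and ($\eta$2) $J(\eta(x))\le J(x)$ for all $x\in\mathcal{M}^{c'}$. Suppose $(J,\eta)$ satisfies $(PS)_c$. Then for every $A\in\mathcal{F}$ with $\sup_AJ=c$ there exists $\bar x\in A\cap\mathcal{K}_c$; in particular $\mathcal{K}_c\neq\emptyset$.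
   Context: $\mathcal{M}^{c'}=\{x\in\mathcal{M}:J(x)\le c'\}$. For sets $A_n\subset\mathcal{M}$, $\limsup_nA_n$ is the set of $x$ such that for some $n_j\to\infty$ there are $x_{n_j}\in A_{n_j}$ with $x_{n_j}\to x$. $\mathcal{K}_c=\{x\in\mathcal{M}:J(x)=J(\eta(x))=c\}$. $(J,\eta)$ satisfies $(PS)_c$ if for every sequence $(x_n)\subset\mathcal{M}$ with $J(x_n)\to c$ and $J(\eta(x_n))\to c$ (so $\eta(x_n)$ is defined for $n$ large) there is $\bar x\in\mathcal{K}_c$ such that, up to a subsequence, $x_n\to\bar x$. *)

theory Defs
  imports "HOL-Analysis.Analysis" "HOL-Library.Extended_Real"
begin

definition lsc_ereal :: "('a::topological_space \<Rightarrow> ereal) \<Rightarrow> bool" where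
  "lsc_ereal J \<longleftrightarrow> (\<forall>t::ereal. closed {x. J x \<le> t})"

definition sublevel :: "('a \<Rightarrow> ereal) \<Rightarrow> real \<Rightarrow> 'a set" where
  "sublevel J c' = {x. J x \<le> ereal c'}"

definition seq_limsup_set :: "(nat \<Rightarrow> 'a::topological_space set) \<Rightarrow> 'a set" where
  "seq_limsup_set A = {x. \<exists>r xs. strict_mono r \<and> (\<forall>j. xs j \<in> A (r j)) \<and> xs \<longlonglongrightarrow> x}"

definition crit_set :: "('a \<Rightarrow> ereal) \<Rightarrow> ('a \<Rightarrow> 'a) \<Rightarrow> real \<Rightarrow> 'a set" where
  "crit_set J \<eta> c = {x. J x = ereal c \<and> J (\<eta> x) = ereal c}"

definition PS_cond :: "('a::metric_space \<Rightarrow> ereal) \<Rightarrow> ('a \<Rightarrow> 'a) \<Rightarrow> real \<Rightarrow> bool" where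
  "PS_cond J \<eta> c \<longleftrightarrow>
     (\<forall>xs::nat \<Rightarrow> 'a. (\<lambda>n. J (xs n)) \<longlonglongrightarrow> ereal c \<and> (\<lambda>n. J (\<eta> (xs n))) \<longlonglongrightarrow> ereal c \<longrightarrow>
        (\<exists>xbar \<in> crit_set J \<eta> c. \<exists>r. strict_mono r \<and> (xs \<circ> r) \<longlonglongrightarrow> xbar))"

end

theory Submission
  imports Defs
begin

text \<open>Choose sets \<open>A\<^sub>n \<in> \<F>\<close> with \<open>sup J\<close> on \<open>A\<^sub>n\<close> tending to \<open>c\<close>; by (F2) their limsup \<open>B\<close> lies in
  \<open>\<F>\<close>, and lower semicontinuity gives \<open>sup J \<le> c\<close> on \<open>B\<close>, so the minimax value is attained.
  Given any \<open>A \<in> \<F>\<close> with \<open>sup J = c\<close> on \<open>A\<close>, also \<open>\<eta>(A) \<in> \<F>\<close>, so \<open>sup J \<circ> \<eta> \<ge> c\<close> on \<open>A\<close>; since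
  \<open>J \<circ> \<eta> \<le> J \<le> c\<close> on \<open>A\<close>, a maximising sequence for \<open>J \<circ> \<eta>\<close> in \<open>A\<close> is a (PS)\<open>\<^sub>c\<close> sequence,
  and its limit is a critical point lying in the closed set \<open>A\<close>.\<close>

lemma ereal_SUP_approx_seq:
  fixes f :: "'a \<Rightarrow> ereal"
  assumes "ereal c \<le> (SUP x\<in>A. f x)" and "\<And>x. x \<in> A \<Longrightarrow> f x \<le> ereal c"
  obtains xs where "\<And>n. xs n \<in> A" and "(\<lambda>n. f (xs n)) \<longlonglongrightarrow> ereal c"
proof -
  have "\<exists>x\<in>A. ereal (c - 1 / real (Suc n)) < f x" for n
  proof -
    have "ereal (c - 1 / real (Suc n)) < ereal c" by simp
    also have "\<dots> \<le> (SUP x\<in>A. f x)" by (rule assms(1))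
    finally show ?thesis by (simp add: less_SUP_iff)
  qed
  then obtain xs where xs: "\<And>n. xs n \<in> A" "\<And>n. ereal (c - 1 / real (Suc n)) < f (xs n)"
    by metis
  have "(\<lambda>n. c - 1 / real (Suc n)) \<longlonglongrightarrow> c - 0"
    by (intro tendsto_intros LIMSEQ_inverse_real_of_nat[unfolded inverse_eq_divide])
  then have lower_lim: "(\<lambda>n. ereal (c - 1 / real (Suc n))) \<longlonglongrightarrow> ereal c"
    by (simp add: tendsto_ereal)
  have "(\<lambda>n. f (xs n)) \<longlonglongrightarrow> ereal c"
    by (rule tendsto_sandwich[OF _ _ lower_lim tendsto_const])
       (use xs assms(2) in \<open>auto intro!: always_eventually less_imp_le\<close>)
  with xs(1) show thesis by (rule that)
qed

lemma lsc_ereal_seq_limsup_set_le: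
  fixes J :: "'a::topological_space \<Rightarrow> ereal"
  assumes "lsc_ereal J"
    and "\<And>n y. y \<in> A n \<Longrightarrow> J y \<le> ereal (b n)"
    and "b \<longlonglongrightarrow> c"
    and "x \<in> seq_limsup_set A"
  shows "J x \<le> ereal c"
proof (rule ereal_le_epsilon2)
  fix e :: real assume "e > 0"
  from assms(4) obtain r xs where r: "strict_mono r" "\<And>j. xs j \<in> A (r j)" "xs \<longlonglongrightarrow> x"
    unfolding seq_limsup_set_def by blast
  have "(b \<circ> r) \<longlonglongrightarrow> c" using LIMSEQ_subseq_LIMSEQ[OF assms(3) r(1)] .
  then have "eventually (\<lambda>j. b (r j) < c + e) sequentially"
    using \<open>e > 0\<close> by (auto dest: order_tendstoD(2)[of _ _ _ "c + e"])
  then have eventually_in: "eventually (\<lambda>j. xs j \<in> {y. J y \<le> ereal (c + e)}) sequentially"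
  proof eventually_elim
    case (elim j)
    have "J (xs j) \<le> ereal (b (r j))" using assms(2)[OF r(2)] .
    also have "\<dots> \<le> ereal (c + e)" using elim by simp
    finally show ?case by simp
  qed
  have "closed {y. J y \<le> ereal (c + e)}"
    using assms(1) unfolding lsc_ereal_def by blast
  then have "x \<in> {y. J y \<le> ereal (c + e)}"
    using eventually_in trivial_limit_sequentially r(3) by (rule Lim_in_closed_set)
  then show "J x \<le> ereal c + ereal e" by simp
qed

lemma minimax_value_attained:
  fixes J :: "'a::topological_space \<Rightarrow> ereal"
  assumes J_lsc: "lsc_ereal J"
    and c_def: "(INF A\<in>\<F>. SUP x\<in>A. J x) = ereal c"
    and "c' > c"
    and F2: "\<And>A. (\<And>n. A n \<in> \<F>) \<Longrightarrow> (\<And>n. A n \<subseteq> sublevel J c') \<Longrightarrow> seq_limsup_set A \<in> \<F>"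
  obtains B where "B \<in> \<F>" and "(SUP x\<in>B. J x) = ereal c"
proof -
  define b where "b n = c + (c' - c) / real (Suc n)" for n
  have "\<exists>A\<in>\<F>. (SUP x\<in>A. J x) < ereal (b n)" for n
    using c_def \<open>c' > c\<close> by (simp add: b_def INF_less_iff[symmetric])
  then obtain A where A: "\<And>n. A n \<in> \<F>" "\<And>n. (SUP x\<in>A n. J x) < ereal (b n)"
    by metis
  have J_le_b: "J y \<le> ereal (b n)" if "y \<in> A n" for n y
    using A(2)[of n] SUP_upper[OF that, of J] by simp
  have "b n \<le> c'" for n
    using \<open>c' > c\<close> by (simp add: b_def field_simps mult_right_mono)
  then have "A n \<subseteq> sublevel J c'" for n
    unfolding sublevel_def using J_le_b by (fastforce intro: order_trans)
  then have B_in: "seq_limsup_set A \<in> \<F>"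
    using F2 A(1) by blast
  have "b \<longlonglongrightarrow> c + 0"
    unfolding b_def by (intro tendsto_intros LIMSEQ_inverse_real_of_nat[unfolded inverse_eq_divide]
        tendsto_divide_0[OF tendsto_const] filterlim_real_sequentially
        filterlim_compose[OF _ filterlim_Suc])
  then have "\<And>x. x \<in> seq_limsup_set A \<Longrightarrow> J x \<le> ereal c"
    using lsc_ereal_seq_limsup_set_le[OF J_lsc J_le_b] by simp
  moreover have "ereal c \<le> (SUP x\<in>seq_limsup_set A. J x)"
    using c_def B_in by (metis INF_lower)
  ultimately have "(SUP x\<in>seq_limsup_set A. J x) = ereal c"
    by (meson SUP_least antisym)
  with B_in show thesis by (rule that)
qed

lemma crit_set_meets_closed_set:
  fixes J :: "'a::metric_space \<Rightarrow> ereal"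
  assumes "closed A"
    and J_le: "\<And>x. x \<in> A \<Longrightarrow> J x \<le> ereal c"
    and image_sup: "ereal c \<le> (SUP y\<in>\<eta> ` A. J y)"
    and eta_descent: "\<And>x. x \<in> A \<Longrightarrow> J (\<eta> x) \<le> J x"
    and PS: "PS_cond J \<eta> c"
  shows "A \<inter> crit_set J \<eta> c \<noteq> {}"
proof -
  have J_eta_le: "J (\<eta> x) \<le> ereal c" if "x \<in> A" for x
    using eta_descent[OF that] J_le[OF that] by (rule order_trans)
  have "ereal c \<le> (SUP x\<in>A. J (\<eta> x))"
    using image_sup by (simp add: image_comp)
  then obtain xs where xs: "\<And>n. xs n \<in> A"
    and J_eta_lim: "(\<lambda>n. J (\<eta> (xs n))) \<longlonglongrightarrow> ereal c"
    using ereal_SUP_approx_seq J_eta_le by blast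
  have "(\<lambda>n. J (xs n)) \<longlonglongrightarrow> ereal c"
    by (rule tendsto_sandwich[OF _ _ J_eta_lim tendsto_const])
       (use xs J_le eta_descent in auto)
  with PS J_eta_lim obtain x r
    where "x \<in> crit_set J \<eta> c" "strict_mono r" "(xs \<circ> r) \<longlonglongrightarrow> x"
    unfolding PS_cond_def by blast
  moreover have "x \<in> A"
    using closed_sequentially[OF \<open>closed A\<close>, of "xs \<circ> r"] xs \<open>(xs \<circ> r) \<longlonglongrightarrow> x\<close> by simp
  ultimately show ?thesis by blast
qed

theorem theorem2p4:
  fixes J :: "'a::metric_space \<Rightarrow> ereal"
    and \<F> :: "'a set set"
    and \<eta> :: "'a \<Rightarrow> 'a"
    and c c' :: real
  assumes J_not_minf: "\<And>x. J x \<noteq> -\<infinity>"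
    and J_lsc: "lsc_ereal J"
    and c_def: "(INF A\<in>\<F>. SUP x\<in>A. J x) = ereal c"
    and F1: "\<And>A. A \<in> \<F> \<Longrightarrow> closed A"
    and c'_gt: "c' > c"
    and F2: "\<And>A. (\<And>n. A n \<in> \<F>) \<Longrightarrow> (\<And>n. A n \<subseteq> sublevel J c') \<Longrightarrow> seq_limsup_set A \<in> \<F>"
    and eta_maps: "\<And>x. x \<in> sublevel J c' \<Longrightarrow> \<eta> x \<in> sublevel J c'"
    and eta1: "\<And>A. A \<in> \<F> \<Longrightarrow> A \<subseteq> sublevel J c' \<Longrightarrow> \<eta> ` A \<in> \<F>"
    and eta2: "\<And>x. x \<in> sublevel J c' \<Longrightarrow> J (\<eta> x) \<le> J x"
    and PS: "PS_cond J \<eta> c"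
  shows "(\<forall>A\<in>\<F>. (SUP x\<in>A. J x) = ereal c \<longrightarrow> A \<inter> crit_set J \<eta> c \<noteq> {})
         \<and> crit_set J \<eta> c \<noteq> {}"
proof -
  have meets: "A \<inter> crit_set J \<eta> c \<noteq> {}" if A: "A \<in> \<F>" "(SUP x\<in>A. J x) = ereal c" for A
  proof -
    have J_le: "J x \<le> ereal c" if "x \<in> A" for x
      using A(2) SUP_upper[OF that, of J] by simp
    then have "A \<subseteq> sublevel J c'"
      using c'_gt unfolding sublevel_def by (force intro: order_trans)
    then have "\<eta> ` A \<in> \<F>" and "\<And>x. x \<in> A \<Longrightarrow> J (\<eta> x) \<le> J x"
      using eta1 eta2 A(1) by auto
    moreover from this(1) have "ereal c \<le> (SUP y\<in>\<eta> ` A. J y)"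
      using c_def by (metis INF_lower)
    ultimately show ?thesis
      using crit_set_meets_closed_set[OF F1[OF A(1)] J_le _ _ PS] by blast
  qed
  obtain B where "B \<in> \<F>" "(SUP x\<in>B. J x) = ereal c"
    using minimax_value_attained[OF J_lsc c_def c'_gt F2] by blast
  with meets show ?thesis by blast
qed

end
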